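(* Let $B$ be a nonzero real vector space, $\lfloor\cdot,\cdot\rfloor$ a symmetric bilinear form on $B$, $q(b):=\tfrac12\lfloor b,b\rfloor$. Let $\rho\colon B\to B$ be a linear surjection such that $\lfloor\rho(b),\rho(c)\rfloor=\lfloor b,-c\rfloor$ for all $b,c\in B$, and let $g$ be a BC--function on $B$. Then $g\circ\rho$ and $g\circ(-\rho)$ are TBC--functions, $\rho\,\mathrm{dom}\,(g\circ\rho)=\mathrm{dom}\,g$, $\rho\,{\cal N}_q(g\circ\rho)={\cal P}_q(g)$, $-\rho\,\mathrm{dom}\,(g\circ(-\rho))=\mathrm{dom}\,g$ and $-\rho\,{\cal N}_q(g\circ(-\rho))={\cal P}_q(g)$.
   Context: For a proper convex $f\colon B\to\,]{-}\infty,\infty]$, $\mathrm{dom}\,f:=\{b\colon f(b)\in\mathbb{R}\}$ and $f^@(c):=\sup_{b\in B}[\lfloor b,c\rfloor-f(b)]$. A BC--function is a proper convex $f$ with $f^@(b)\ge f(b)\ge q(b)$ for all $b$; a TBC--function is a proper convex $g$ with $g^@(-b)\ge g(b)\ge -q(b)$ for all $b$. For $h\ge q$, ${\cal P}_q(h):=\{b\colon h(b)=q(b)\}$; for $h\ge -q$, ${\cal N}_q(h):=\{b\colon h(b)=-q(b)\}$. *)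

theory Defs
  imports "HOL-Analysis.Analysis"
begin

text \<open>Functions B \<rightarrow> ]-\<infinity>,\<infinity>] are modelled as ereal-valued functions never taking -\<infinity>.
  The bilinear form is a parameter bf.\<close>

definition qf :: "('a \<Rightarrow> 'a \<Rightarrow> real) \<Rightarrow> 'a \<Rightarrow> real" where
  "qf bf b = bf b b / 2"

definition efdom :: "('a \<Rightarrow> ereal) \<Rightarrow> 'a set" where
  "efdom f = {b. \<exists>r. f b = ereal r}"

definition proper_fun :: "('a \<Rightarrow> ereal) \<Rightarrow> bool" where
  "proper_fun f \<longleftrightarrow> (\<forall>b. f b \<noteq> -\<infinity>) \<and> efdom f \<noteq> {}"

definition convex_efun :: "('a::real_vector \<Rightarrow> ereal) \<Rightarrow> bool" where
  "convex_efun f \<longleftrightarrow> (\<forall>x y t. 0 < t \<and> t < 1 \<longrightarrow>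
      f (t *\<^sub>R x + (1 - t) *\<^sub>R y) \<le> ereal t * f x + ereal (1 - t) * f y)"

definition fconj :: "('a \<Rightarrow> 'a \<Rightarrow> real) \<Rightarrow> ('a \<Rightarrow> ereal) \<Rightarrow> 'a \<Rightarrow> ereal" where
  "fconj bf f c = (SUP b. ereal (bf b c) - f b)"

definition BC_fun :: "('a::real_vector \<Rightarrow> 'a \<Rightarrow> real) \<Rightarrow> ('a \<Rightarrow> ereal) \<Rightarrow> bool" where
  "BC_fun bf f \<longleftrightarrow> proper_fun f \<and> convex_efun f \<and>
     (\<forall>b. fconj bf f b \<ge> f b \<and> f b \<ge> ereal (qf bf b))"

definition TBC_fun :: "('a::real_vector \<Rightarrow> 'a \<Rightarrow> real) \<Rightarrow> ('a \<Rightarrow> ereal) \<Rightarrow> bool" where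
  "TBC_fun bf g \<longleftrightarrow> proper_fun g \<and> convex_efun g \<and>
     (\<forall>b. fconj bf g (-b) \<ge> g b \<and> g b \<ge> ereal (- qf bf b))"

definition Pq :: "('a \<Rightarrow> 'a \<Rightarrow> real) \<Rightarrow> ('a \<Rightarrow> ereal) \<Rightarrow> 'a set" where
  "Pq bf h = {b. h b = ereal (qf bf b)}"

definition Nq :: "('a \<Rightarrow> 'a \<Rightarrow> real) \<Rightarrow> ('a \<Rightarrow> ereal) \<Rightarrow> 'a set" where
  "Nq bf h = {b. h b = ereal (- qf bf b)}"

end

theory Submission
  imports Defs
begin

text \<open>Composition with a linear surjection \<open>\<rho>\<close> satisfying \<open>\<lfloor>\<rho> b, \<rho> c\<rfloor> = \<lfloor>b, -c\<rfloor>\<close>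
  turns \<open>q\<close> into \<open>-q\<close>, so the lower bound \<open>g \<ge> q\<close> becomes \<open>g \<circ> \<rho> \<ge> -q\<close>; and since \<open>\<rho>\<close>
  is onto, the supremum defining \<open>(g \<circ> \<rho>)\<^sup>@(-b)\<close> runs over the same values as the one
  defining \<open>g\<^sup>@(\<rho> b)\<close>. Replacing \<open>\<rho>\<close> by \<open>-\<rho>\<close> preserves all hypotheses.\<close>

definition anti_isometry :: "('a \<Rightarrow> 'a \<Rightarrow> real) \<Rightarrow> ('a \<Rightarrow> 'a::ab_group_add) \<Rightarrow> bool" where
  "anti_isometry bf \<rho> \<longleftrightarrow> (\<forall>b c. bf (\<rho> b) (\<rho> c) = bf b (- c))"

lemma image_efdom_comp_surj:
  assumes "surj \<rho>"
  shows "\<rho> ` efdom (g \<circ> \<rho>) = efdom g"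
  using surj_image_vimage_eq[OF assms, of "efdom g"] by (simp add: efdom_def vimage_def)

lemma proper_fun_comp_surj:
  assumes "surj \<rho>" and "proper_fun g"
  shows "proper_fun (g \<circ> \<rho>)"
  using assms image_efdom_comp_surj[OF assms(1), of g] by (auto simp: proper_fun_def)

lemma convex_efun_comp_linear:
  assumes "linear \<rho>" and "convex_efun g"
  shows "convex_efun (g \<circ> \<rho>)"
  unfolding convex_efun_def
proof (intro allI impI)
  fix x y and t :: real
  assume "0 < t \<and> t < 1"
  moreover have "\<rho> (t *\<^sub>R x + (1 - t) *\<^sub>R y) = t *\<^sub>R \<rho> x + (1 - t) *\<^sub>R \<rho> y"
    by (simp add: linear_add[OF assms(1)] linear_scale[OF assms(1)])
  ultimately show "(g \<circ> \<rho>) (t *\<^sub>R x + (1 - t) *\<^sub>R y)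
      \<le> ereal t * (g \<circ> \<rho>) x + ereal (1 - t) * (g \<circ> \<rho>) y"
    using assms(2) unfolding convex_efun_def by simp
qed

lemma qf_anti_isometry:
  assumes "bilinear bf" and "anti_isometry bf \<rho>"
  shows "qf bf (\<rho> b) = - qf bf b"
proof -
  have "linear (bf b)" using assms(1) by (simp add: bilinear_def)
  then show ?thesis using assms(2) by (simp add: qf_def anti_isometry_def linear_neg)
qed

lemma image_Nq_comp_anti_isometry:
  assumes "bilinear bf" and "anti_isometry bf \<rho>" and "surj \<rho>"
  shows "\<rho> ` Nq bf (g \<circ> \<rho>) = Pq bf g"
proof -
  have "Nq bf (g \<circ> \<rho>) = \<rho> -` Pq bf g"
    by (auto simp: Nq_def Pq_def qf_anti_isometry[OF assms(1,2)])
  then show ?thesis using surj_image_vimage_eq[OF assms(3)] by simp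
qed

lemma fconj_comp_anti_isometry:
  assumes "anti_isometry bf \<rho>" and "surj \<rho>"
  shows "fconj bf (g \<circ> \<rho>) (- b) = fconj bf g (\<rho> b)"
proof -
  have "fconj bf (g \<circ> \<rho>) (- b) = (SUP c. ereal (bf (\<rho> c) (\<rho> b)) - g (\<rho> c))"
    using assms(1) by (simp add: fconj_def anti_isometry_def)
  also have "\<dots> = (SUP d\<in>range \<rho>. ereal (bf d (\<rho> b)) - g d)"
    by (simp add: image_image)
  also have "\<dots> = fconj bf g (\<rho> b)"
    by (simp add: fconj_def assms(2))
  finally show ?thesis .
qed

lemma TBC_fun_comp_anti_isometry:
  assumes "bilinear bf" and "linear \<rho>" and "surj \<rho>"
    and "anti_isometry bf \<rho>" and "BC_fun bf g"
  shows "TBC_fun bf (g \<circ> \<rho>)"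
  unfolding TBC_fun_def
proof (intro conjI allI)
  show "proper_fun (g \<circ> \<rho>)" "convex_efun (g \<circ> \<rho>)"
    using assms(5) proper_fun_comp_surj[OF assms(3)] convex_efun_comp_linear[OF assms(2)]
    by (auto simp: BC_fun_def)
  fix b
  have "fconj bf g (\<rho> b) \<ge> g (\<rho> b)" "g (\<rho> b) \<ge> ereal (qf bf (\<rho> b))"
    using assms(5) by (auto simp: BC_fun_def)
  then show "fconj bf (g \<circ> \<rho>) (- b) \<ge> (g \<circ> \<rho>) b" "(g \<circ> \<rho>) b \<ge> ereal (- qf bf b)"
    by (simp_all add: fconj_comp_anti_isometry[OF assms(4,3)] qf_anti_isometry[OF assms(1,4)])
qed

lemma anti_isometry_uminus:
  assumes "bilinear bf" and "anti_isometry bf \<rho>"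
  shows "anti_isometry bf (\<lambda>b. - \<rho> b)"
  unfolding anti_isometry_def
proof (intro allI)
  fix b c
  have "linear (bf x)" "linear (\<lambda>y. bf y x)" for x
    using assms(1) by (simp_all add: bilinear_def)
  then have "bf (- x) (- y) = bf x y" for x y
    using linear_neg[of "bf (- x)" y] linear_neg[of "\<lambda>z. bf z y" x] by simp
  then show "bf (- \<rho> b) (- \<rho> c) = bf b (- c)"
    using assms(2) by (simp add: anti_isometry_def)
qed

lemma surj_uminus_comp:
  fixes \<rho> :: "'a \<Rightarrow> 'b::ab_group_add"
  assumes "surj \<rho>"
  shows "surj (\<lambda>b. - \<rho> b)"
  by (metis assms surj_def minus_minus)

theorem lemma3p14:
  fixes bf :: "'a::real_vector \<Rightarrow> 'a \<Rightarrow> real"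
    and \<rho> :: "'a \<Rightarrow> 'a"
    and g :: "'a \<Rightarrow> ereal"
  assumes nonzero: "\<exists>b::'a. b \<noteq> 0"
    and bil: "bilinear bf"
    and sym: "\<And>b c. bf b c = bf c b"
    and lin: "linear \<rho>"
    and sur: "surj \<rho>"
    and rho_bf: "\<And>b c. bf (\<rho> b) (\<rho> c) = bf b (- c)"
    and BC: "BC_fun bf g"
  shows "TBC_fun bf (g \<circ> \<rho>) \<and> TBC_fun bf (g \<circ> (\<lambda>b. - \<rho> b))
    \<and> \<rho> ` efdom (g \<circ> \<rho>) = efdom g
    \<and> \<rho> ` Nq bf (g \<circ> \<rho>) = Pq bf g
    \<and> (\<lambda>b. - \<rho> b) ` efdom (g \<circ> (\<lambda>b. - \<rho> b)) = efdom g
    \<and> (\<lambda>b. - \<rho> b) ` Nq bf (g \<circ> (\<lambda>b. - \<rho> b)) = Pq bf g"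
proof -
  have anti: "anti_isometry bf \<rho>"
    using rho_bf by (simp add: anti_isometry_def)
  have lin': "linear (\<lambda>b. - \<rho> b)"
    using lin by (rule linear_compose_neg)
  have sur': "surj (\<lambda>b. - \<rho> b)"
    using sur by (rule surj_uminus_comp)
  have anti': "anti_isometry bf (\<lambda>b. - \<rho> b)"
    using bil anti by (rule anti_isometry_uminus)
  show ?thesis
    using TBC_fun_comp_anti_isometry[OF bil lin sur anti BC]
      TBC_fun_comp_anti_isometry[OF bil lin' sur' anti' BC]
      image_efdom_comp_surj[OF sur] image_efdom_comp_surj[OF sur']
      image_Nq_comp_anti_isometry[OF bil anti sur]
      image_Nq_comp_anti_isometry[OF bil anti' sur']
    by (intro conjI)
qed

end
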